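(* If $\phi$ is a rational inner function on $\mathbb{D}^2$, then every $\tau\in\mathbb{T}^2$ is a B-point for $\phi$; that is, there exists a sequence $\{\lambda_k\}\subseteq\mathbb{D}^2$ converging to $\tau$ such that $\frac{1-|\phi(\lambda_k)|}{1-\|\lambda_k\|}$ is bounded, where $\|z\|=\max\{|z_1|,|z_2|\}$.
   Context: A rational inner function on $\mathbb{D}^2$ is a rational function $\phi=q/p$ holomorphic on $\mathbb{D}^2$ with $|\phi(\zeta)|=1$ for almost every $\zeta\in\mathbb{T}^2$. *)

theory Defs
  imports "HOL-Analysis.Analysis"
begin

definition poly2 :: "(nat \<Rightarrow> nat \<Rightarrow> complex) \<Rightarrow> nat \<Rightarrow> complex \<times> complex \<Rightarrow> complex" where
  "poly2 c N z = (\<Sum>i\<le>N. \<Sum>j\<le>N. c i j * fst z ^ i * snd z ^ j)"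

definition bidisk :: "(complex \<times> complex) set" where
  "bidisk = {z. cmod (fst z) < 1 \<and> cmod (snd z) < 1}"

definition torus2 :: "(complex \<times> complex) set" where
  "torus2 = {z. cmod (fst z) = 1 \<and> cmod (snd z) = 1}"

definition maxnorm :: "complex \<times> complex \<Rightarrow> real" where
  "maxnorm z = max (cmod (fst z)) (cmod (snd z))"

text \<open>Holomorphic on an open set of C^2: continuous and holomorphic in each variable
  separately (equivalent to joint holomorphy by Osgood/Hartogs).\<close>
definition holomorphic2_on :: "(complex \<times> complex \<Rightarrow> complex) \<Rightarrow> (complex \<times> complex) set \<Rightarrow> bool" where
  "holomorphic2_on f S \<longleftrightarrow> continuous_on S f \<and>
     (\<forall>z\<in>S. (\<lambda>w. f (w, snd z)) holomorphic_on {w. (w, snd z) \<in> S}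
          \<and> (\<lambda>w. f (fst z, w)) holomorphic_on {w. (fst z, w) \<in> S})"

definition rational_inner :: "(complex \<times> complex \<Rightarrow> complex) \<Rightarrow> bool" where
  "rational_inner \<phi> \<longleftrightarrow>
     (\<exists>p q N. (\<exists>i\<le>N. \<exists>j\<le>N. p i j \<noteq> 0) \<and>
        (\<forall>z\<in>bidisk. poly2 p N z \<noteq> 0 \<longrightarrow> \<phi> z = poly2 q N z / poly2 p N z) \<and>
        holomorphic2_on \<phi> bidisk \<and>
        (AE x in lborel. x \<in> {0..2*pi} \<times> {0..2*pi} \<longrightarrow>
           (let \<zeta> = (cis (fst x), cis (snd x)) in
              poly2 p N \<zeta> \<noteq> 0 \<and> cmod (poly2 q N \<zeta> / poly2 p N \<zeta>) = 1)))"

end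

theory Submission
  imports Defs "HOL-Computational_Algebra.Polynomial"
begin

text \<open>Restrict \<open>\<phi> = q/p\<close> to the curve \<open>z \<mapsto> (z \<tau>\<^sub>1, z\<^bsup>N+1\<^esup> \<tau>\<^sub>2)\<close>: it maps the unit disc
  into the bidisk and the unit circle into the torus, passes through \<open>\<tau>\<close> at \<open>z = 1\<close>, and
  along it the max-norm is \<open>|z|\<close>. The restrictions \<open>Q, P\<close> of \<open>q, p\<close> are one-variable
  polynomials with \<open>|Q| = |P|\<close> on the unit circle (by continuity, from the a.e. condition).
  Comparing both sides near \<open>1\<close> shows that \<open>Q\<close> and \<open>P\<close> vanish to the same order at \<open>1\<close>; after
  cancelling that factor, \<open>Q/P\<close> is analytic at \<open>1\<close> with modulus \<open>1\<close> there, hence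
  \<open>|1 - |Q(r)/P(r)|| = O(1 - r)\<close> as \<open>r \<up> 1\<close>, which is the B-point estimate along the radius.\<close>

lemma isCont_agree_on_unit_circle:
  fixes f g :: "complex \<Rightarrow> 'a::t2_space"
  assumes "isCont f w" "isCont g w" "cmod w = 1"
    and agree: "\<And>z. cmod z = 1 \<Longrightarrow> z \<noteq> w \<Longrightarrow> f z = g z"
  shows "f w = g w"
proof -
  have "w islimpt sphere 0 1"
  proof (rule connected_imp_perfect)
    show "sphere 0 1 \<noteq> {x}" for x :: complex
    proof
      assume "sphere 0 1 = {x}"
      moreover have "1 \<in> sphere (0::complex) 1" "-1 \<in> sphere (0::complex) 1" by auto
      ultimately show False by (metis equals0D insert_iff one_neq_neg_one)
    qed
  qed (use assms(3) in \<open>auto simp: connected_sphere\<close>)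
  hence nontriv: "\<not> trivial_limit (at w within sphere 0 1)"
    by (simp add: trivial_limit_within)
  have "(f \<longlongrightarrow> f w) (at w within sphere 0 1)" "(g \<longlongrightarrow> g w) (at w within sphere 0 1)"
    using assms(1,2) by (auto simp: isCont_def intro: tendsto_within_subset)
  moreover have "eventually (\<lambda>z. f z = g z) (at w within sphere 0 1)"
    using agree by (auto simp: eventually_at_filter)
  ultimately show ?thesis
    using tendsto_unique[OF nontriv] tendsto_cong by metis
qed

lemma unit_circle_power_factor_at_1:
  fixes u v :: "complex \<Rightarrow> complex"
  assumes "isCont u 1" "isCont v 1" "v 1 \<noteq> 0"
    and "\<And>z. cmod z = 1 \<Longrightarrow> z \<noteq> 1 \<Longrightarrow> cmod (z - 1) ^ k * cmod (u z) = cmod (v z)"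
  shows "k = 0 \<and> cmod (u 1) = cmod (v 1)"
proof -
  have "cmod (1 - 1) ^ k * cmod (u 1) = cmod (v 1)"
    by (rule isCont_agree_on_unit_circle) (simp_all add: assms)
  with assms(3) show ?thesis by (cases k) auto
qed

lemma poly_factor_at_1:
  fixes P :: "complex poly"
  assumes "P \<noteq> 0"
  obtains P' where "P = [:-1, 1:] ^ order 1 P * P'" "poly P' 1 \<noteq> 0"
  using order_decomp[OF assms, of 1] poly_eq_0_iff_dvd by metis

lemma same_order_at_1_if_eq_norm_on_unit_circle:
  fixes P Q :: "complex poly"
  assumes "P \<noteq> 0" and circ: "\<And>z. cmod z = 1 \<Longrightarrow> cmod (poly Q z) = cmod (poly P z)"
  obtains k P' Q' where "P = [:-1, 1:] ^ k * P'" "Q = [:-1, 1:] ^ k * Q'"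
    "poly P' 1 \<noteq> 0" "cmod (poly Q' 1) = cmod (poly P' 1)"
proof -
  obtain P' where P': "P = [:-1, 1:] ^ order 1 P * P'" "poly P' 1 \<noteq> 0"
    using poly_factor_at_1[OF assms(1)] by blast
  have poly_P: "poly P z = (z - 1) ^ order 1 P * poly P' z" for z
    by (subst P'(1)) (simp add: poly_power)
  have "Q \<noteq> 0"
  proof
    assume "Q = 0"
    have "cmod (z - 1) ^ 0 * cmod 0 = cmod (poly P' z)" if "cmod z = 1" "z \<noteq> 1" for z
      using circ[OF that(1)] that(2) by (simp add: \<open>Q = 0\<close> poly_P norm_mult)
    with P'(2) show False
      using unit_circle_power_factor_at_1[of "\<lambda>_. 0" "poly P'"] by (auto intro: poly_isCont)
  qed
  then obtain Q' where Q': "Q = [:-1, 1:] ^ order 1 Q * Q'" "poly Q' 1 \<noteq> 0"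
    using poly_factor_at_1 by blast
  have poly_Q: "poly Q z = (z - 1) ^ order 1 Q * poly Q' z" for z
    by (subst Q'(1)) (simp add: poly_power)
  have circ': "cmod (z - 1) ^ order 1 Q * cmod (poly Q' z) = cmod (z - 1) ^ order 1 P * cmod (poly P' z)"
    if "cmod z = 1" for z
    using circ[OF that] by (simp add: poly_P poly_Q norm_mult norm_power)
  have "order 1 Q = order 1 P \<and> cmod (poly Q' 1) = cmod (poly P' 1)"
  proof (cases "order 1 Q \<le> order 1 P")
    case True
    have "cmod (z - 1) ^ (order 1 P - order 1 Q) * cmod (poly P' z) = cmod (poly Q' z)"
      if "cmod z = 1" "z \<noteq> 1" for z
    proof -
      have "cmod (z - 1) ^ order 1 P = cmod (z - 1) ^ order 1 Q * cmod (z - 1) ^ (order 1 P - order 1 Q)"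
        using True by (simp flip: power_add)
      with circ'[OF that(1)] that(2) show ?thesis by (simp add: mult.assoc)
    qed
    from unit_circle_power_factor_at_1[of "poly P'" "poly Q'", OF _ _ Q'(2) this] True
    show ?thesis by (auto intro: poly_isCont)
  next
    case False
    have "cmod (z - 1) ^ (order 1 Q - order 1 P) * cmod (poly Q' z) = cmod (poly P' z)"
      if "cmod z = 1" "z \<noteq> 1" for z
    proof -
      have "cmod (z - 1) ^ order 1 Q = cmod (z - 1) ^ order 1 P * cmod (z - 1) ^ (order 1 Q - order 1 P)"
        using False by (simp flip: power_add)
      with circ'[OF that(1)] that(2) show ?thesis by (simp add: mult.assoc)
    qed
    from unit_circle_power_factor_at_1[of "poly Q'" "poly P'", OF _ _ P'(2) this] False
    show ?thesis by (auto intro: poly_isCont)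
  qed
  with P' Q' that show thesis by metis
qed

lemma poly_quotient_lipschitz_at:
  fixes A B :: "complex poly"
  assumes "poly B w \<noteq> 0"
  obtains \<delta> C where "\<delta> > 0"
    "\<And>z. cmod (z - w) < \<delta> \<Longrightarrow>
       poly B z \<noteq> 0 \<and> cmod (poly A z / poly B z - poly A w / poly B w) \<le> C * cmod (z - w)"
proof -
  define R where "R = smult (poly B w) A - smult (poly A w) B"
  have "poly R w = 0" unfolding R_def by simp
  then obtain S where S: "R = [:-w, 1:] * S" using poly_eq_0_iff_dvd by (metis dvdE)
  define h where "h z = poly S z / (poly B z * poly B w)" for z
  have quotient_diff: "poly A z / poly B z - poly A w / poly B w = (z - w) * h z"
    if "poly B z \<noteq> 0" for z
  proof -
    have "poly R z = (z - w) * poly S z" by (simp add: S algebra_simps)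
    with that assms show ?thesis by (simp add: R_def h_def field_simps)
  qed
  obtain \<delta>1 where \<delta>1: "\<delta>1 > 0" "\<And>z. dist z w < \<delta>1 \<Longrightarrow> dist (poly B z) (poly B w) < cmod (poly B w)"
    using poly_isCont[of w B] assms unfolding continuous_at_eps_delta by (meson zero_less_norm_iff)
  have "isCont h w" unfolding h_def using assms by (simp add: poly_isCont)
  then obtain \<delta>2 where \<delta>2: "\<delta>2 > 0" "\<And>z. dist z w < \<delta>2 \<Longrightarrow> dist (h z) (h w) < 1"
    unfolding continuous_at_eps_delta by (meson zero_less_one)
  show thesis
  proof (rule that[of "min \<delta>1 \<delta>2" "cmod (h w) + 1"])
    fix z assume z: "cmod (z - w) < min \<delta>1 \<delta>2"
    have "poly B z \<noteq> 0" using \<delta>1(2)[of z] z by (auto simp: dist_norm)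
    moreover have "cmod (h z) \<le> cmod (h w) + 1"
      using \<delta>2(2)[of z] z norm_triangle_ineq2[of "h z" "h w"] by (simp add: dist_norm)
    ultimately show "poly B z \<noteq> 0 \<and>
        cmod (poly A z / poly B z - poly A w / poly B w) \<le> (cmod (h w) + 1) * cmod (z - w)"
      using mult_right_mono[of "cmod (h z)" _ "cmod (z - w)"]
      by (simp add: quotient_diff norm_mult mult.commute[of "cmod (z - w)"])
  qed (use \<delta>1 \<delta>2 in simp)
qed

lemma radial_estimate_at_1:
  fixes P Q :: "complex poly"
  assumes "P \<noteq> 0" and "\<And>z. cmod z = 1 \<Longrightarrow> cmod (poly Q z) = cmod (poly P z)"
  obtains \<delta> C where "\<delta> > 0"
    "\<And>r::real. 1 - \<delta> < r \<Longrightarrow> r < 1 \<Longrightarrow> poly P (of_real r) \<noteq> 0 \<and>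
       \<bar>1 - cmod (poly Q (of_real r) / poly P (of_real r))\<bar> \<le> C * (1 - r)"
proof -
  obtain k P' Q' where P': "P = [:-1, 1:] ^ k * P'" "poly P' 1 \<noteq> 0"
    and Q': "Q = [:-1, 1:] ^ k * Q'" "cmod (poly Q' 1) = cmod (poly P' 1)"
    using same_order_at_1_if_eq_norm_on_unit_circle[OF assms] by blast
  obtain \<delta> C where "\<delta> > 0" and lipschitz: "\<And>z. cmod (z - 1) < \<delta> \<Longrightarrow>
       poly P' z \<noteq> 0 \<and> cmod (poly Q' z / poly P' z - poly Q' 1 / poly P' 1) \<le> C * cmod (z - 1)"
    using poly_quotient_lipschitz_at[OF P'(2)] by blast
  show thesis
  proof (rule that[OF \<open>\<delta> > 0\<close>])
    fix r :: real assume r: "1 - \<delta> < r" "r < 1"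
    define z where "z = complex_of_real r"
    have dist_z: "cmod (z - 1) = 1 - r"
      using r(2) unfolding z_def by (metis norm_of_real of_real_1 of_real_diff abs_of_pos diff_gt_0_iff_gt norm_minus_commute)
    with r have "z \<noteq> 1" "poly P' z \<noteq> 0"
      and estimate: "cmod (poly Q' z / poly P' z - poly Q' 1 / poly P' 1) \<le> C * (1 - r)"
      using lipschitz[of z] by auto
    hence "poly P z \<noteq> 0" and "poly Q z / poly P z = poly Q' z / poly P' z"
      by (simp_all add: P'(1) Q'(1) poly_power)
    moreover have "cmod (poly Q' 1 / poly P' 1) = 1"
      using Q'(2) P'(2) by (simp add: norm_divide)
    ultimately show "poly P (of_real r) \<noteq> 0 \<and>
       \<bar>1 - cmod (poly Q (of_real r) / poly P (of_real r))\<bar> \<le> C * (1 - r)"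
      using estimate norm_triangle_ineq3[of "poly Q' z / poly P' z" "poly Q' 1 / poly P' 1"]
      by (simp add: z_def[symmetric] abs_minus_commute)
  qed
qed

lemma continuous_eq_if_AE_eq:
  fixes f g :: "'a::euclidean_space \<Rightarrow> 'b::t2_space"
  assumes "continuous_on UNIV f" "continuous_on UNIV g"
    and "AE x in lborel. x \<in> S \<longrightarrow> f x = g x" and "x \<in> closure (interior S)"
  shows "f x = g x"
proof -
  have closed: "closed {x. f x = g x}"
    using closed_Collect_eq[OF assms(1,2)] .
  have "AE x\<in>interior S in lebesgue. x \<in> {x. f x = g x}"
    using AE_completion[OF assms(3)] interior_subset by (auto elim!: eventually_mono)
  hence "interior S \<subseteq> {x. f x = g x}"
    using mem_closed_if_AE_lebesgue_open[OF open_interior closed] by blast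
  with assms(4) closure_minimal[OF _ closed] show ?thesis by blast
qed

lemma unit_circle_eq_cis:
  assumes "cmod z = 1"
  obtains a where "a \<in> {0..2*pi}" "z = cis a"
proof (rule that)
  show "Arg2pi z \<in> {0..2*pi}" using Arg2pi_ge_0 Arg2pi_lt_2pi by (auto simp: less_imp_le)
  show "z = cis (Arg2pi z)" using Arg2pi_eq[of z] assms by (simp add: cis_conv_exp)
qed

lemma poly2_norm_eq_on_torus:
  assumes AE: "AE x in lborel. x \<in> {0..2*pi} \<times> {0..2*pi} \<longrightarrow>
           (let \<zeta> = (cis (fst x), cis (snd x)) in
              poly2 p N \<zeta> \<noteq> 0 \<and> cmod (poly2 q N \<zeta> / poly2 p N \<zeta>) = 1)"
    and "\<zeta> \<in> torus2"
  shows "cmod (poly2 q N \<zeta>) = cmod (poly2 p N \<zeta>)"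
proof -
  define on_torus where "on_torus c x = cmod (poly2 c N (cis (fst x), cis (snd x)))" for c x
  have continuous: "continuous_on UNIV (on_torus c)" for c
    unfolding on_torus_def poly2_def by (intro continuous_intros)
  obtain a b where "a \<in> {0..2*pi}" "fst \<zeta> = cis a" "b \<in> {0..2*pi}" "snd \<zeta> = cis b"
  proof -
    from \<open>\<zeta> \<in> torus2\<close> have "cmod (fst \<zeta>) = 1" "cmod (snd \<zeta>) = 1"
      unfolding torus2_def by auto
    with that show thesis using unit_circle_eq_cis by metis
  qed
  hence "\<zeta> = (cis a, cis b)" and ab: "(a, b) \<in> closure (interior ({0..2*pi} \<times> {0..2*pi}))"
    by (auto simp: prod_eq_iff interior_Times closure_Times)
  have "AE x in lborel. x \<in> {0..2*pi} \<times> {0..2*pi} \<longrightarrow> on_torus q x = on_torus p x"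
    using AE by eventually_elim (auto simp: on_torus_def Let_def norm_divide)
  from continuous_eq_if_AE_eq[OF continuous continuous this ab] \<open>\<zeta> = (cis a, cis b)\<close>
  show ?thesis by (simp add: on_torus_def)
qed

definition bidisk_curve :: "nat \<Rightarrow> complex \<times> complex \<Rightarrow> complex \<Rightarrow> complex \<times> complex" where
  "bidisk_curve N \<tau> z = (z * fst \<tau>, z ^ Suc N * snd \<tau>)"

text \<open>The exponent \<open>Suc N\<close> makes \<open>(i, j) \<mapsto> i + Suc N * j\<close> injective on \<open>{..N}\<^sup>2\<close>, so distinct
  monomials of \<open>poly2 c N\<close> stay distinct along the curve (Kronecker substitution).\<close>

definition curve_poly :: "(nat \<Rightarrow> nat \<Rightarrow> complex) \<Rightarrow> nat \<Rightarrow> complex \<times> complex \<Rightarrow> complex poly" where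
  "curve_poly c N \<tau> = (\<Sum>i\<le>N. \<Sum>j\<le>N. monom (c i j * fst \<tau> ^ i * snd \<tau> ^ j) (i + Suc N * j))"

lemma poly_curve_poly: "poly (curve_poly c N \<tau>) z = poly2 c N (bidisk_curve N \<tau> z)"
  unfolding curve_poly_def poly2_def bidisk_curve_def poly_sum poly_monom
  by (simp add: power_add power_mult_distrib mult_ac flip: power_mult)

lemma coeff_curve_poly:
  assumes "i \<le> N" "j \<le> N"
  shows "coeff (curve_poly c N \<tau>) (i + Suc N * j) = c i j * fst \<tau> ^ i * snd \<tau> ^ j"
proof -
  have digits: "i' + Suc N * j' = i + Suc N * j \<longleftrightarrow> i' = i \<and> j' = j" if "i' \<le> N" for i' j'
  proof
    assume eq: "i' + Suc N * j' = i + Suc N * j"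
    have "i' = (i' + Suc N * j') mod Suc N" "i = (i + Suc N * j) mod Suc N"
      using that assms by (metis mod_mult_self2 mod_less le_imp_less_Suc)+
    with eq have "i' = i" "Suc N * j' = Suc N * j" by simp_all
    thus "i' = i \<and> j' = j" using mult_left_cancel[of "Suc N" j' j] by simp
  qed simp
  have "coeff (curve_poly c N \<tau>) (i + Suc N * j) =
      (\<Sum>i'\<le>N. \<Sum>j'\<le>N. if j' = j then if i' = i then c i j * fst \<tau> ^ i * snd \<tau> ^ j else 0 else 0)"
    unfolding curve_poly_def coeff_sum coeff_monom by (intro sum.cong refl) (simp add: digits del: mult_Suc)
  also have "\<dots> = c i j * fst \<tau> ^ i * snd \<tau> ^ j"
    using assms by simp
  finally show ?thesis .
qed

lemma curve_poly_nonzero: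
  assumes "i \<le> N" "j \<le> N" "c i j \<noteq> 0" "fst \<tau> \<noteq> 0" "snd \<tau> \<noteq> 0"
  shows "curve_poly c N \<tau> \<noteq> 0"
  using coeff_curve_poly[of i N j c \<tau>] assms by auto

lemma bidisk_curve_in_torus2:
  "\<tau> \<in> torus2 \<Longrightarrow> cmod z = 1 \<Longrightarrow> bidisk_curve N \<tau> z \<in> torus2"
  by (simp add: torus2_def bidisk_curve_def norm_mult norm_power)

lemma bidisk_curve_in_bidisk:
  assumes "\<tau> \<in> torus2" "cmod z < 1"
  shows "bidisk_curve N \<tau> z \<in> bidisk"
proof -
  have "cmod z ^ Suc N \<le> cmod z" using assms(2) power_decreasing[of 1 "Suc N" "cmod z"] by simp
  with assms show ?thesis by (simp add: torus2_def bidisk_def bidisk_curve_def norm_mult norm_power)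
qed

lemma maxnorm_bidisk_curve:
  assumes "\<tau> \<in> torus2" "cmod z \<le> 1"
  shows "maxnorm (bidisk_curve N \<tau> z) = cmod z"
proof -
  have "cmod z ^ Suc N \<le> cmod z" using assms(2) power_decreasing[of 1 "Suc N" "cmod z"] by simp
  with assms(1) show ?thesis
    by (simp add: torus2_def maxnorm_def bidisk_curve_def norm_mult norm_power)
qed

lemma tendsto_bidisk_curve_radial:
  assumes "r \<longlonglongrightarrow> 1"
  shows "(\<lambda>k. bidisk_curve N \<tau> (of_real (r k))) \<longlonglongrightarrow> \<tau>"
proof -
  have "(\<lambda>k. complex_of_real (r k)) \<longlonglongrightarrow> 1"
    using tendsto_of_real[OF assms] by simp
  hence "(\<lambda>k. bidisk_curve N \<tau> (of_real (r k))) \<longlonglongrightarrow> bidisk_curve N \<tau> 1"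
    unfolding bidisk_curve_def by (intro tendsto_intros)
  thus ?thesis by (simp add: bidisk_curve_def)
qed

lemma tendsto_1_from_below:
  fixes \<delta> :: real
  assumes "\<delta> > 0"
  obtains r :: "nat \<Rightarrow> real" where "\<And>k. 0 \<le> r k" "\<And>k. 1 - \<delta> < r k" "\<And>k. r k < 1" "r \<longlonglongrightarrow> 1"
proof
  define d where "d = min \<delta> 1"
  have d: "0 < d" "d \<le> \<delta>" "d \<le> 1" using assms by (auto simp: d_def)
  fix k :: nat
  have "d / (real k + 2) \<le> d / 2" using d by (intro divide_left_mono) auto
  moreover have "0 < d / (real k + 2)" using d by simp
  ultimately show "0 \<le> 1 - d / (real k + 2)" "1 - \<delta> < 1 - d / (real k + 2)" "1 - d / (real k + 2) < 1"
    using d by linarith+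
next
  have "(\<lambda>k. min \<delta> 1 / real (k + 2)) \<longlonglongrightarrow> 0"
    by (rule LIMSEQ_ignore_initial_segment[OF lim_const_over_n])
  from tendsto_diff[OF tendsto_const this]
  show "(\<lambda>k. 1 - min \<delta> 1 / (real k + 2)) \<longlonglongrightarrow> 1" by (simp add: add.commute)
qed

theorem lemma2p1:
  fixes \<phi> :: "complex \<times> complex \<Rightarrow> complex" and \<tau> :: "complex \<times> complex"
  assumes "rational_inner \<phi>" and "\<tau> \<in> torus2"
  shows "\<exists>lam :: nat \<Rightarrow> complex \<times> complex. (\<forall>k. lam k \<in> bidisk) \<and> lam \<longlonglongrightarrow> \<tau> \<and>
           bounded (range (\<lambda>k. (1 - cmod (\<phi> (lam k))) / (1 - maxnorm (lam k))))"
proof -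
  obtain p q N where "\<exists>i\<le>N. \<exists>j\<le>N. p i j \<noteq> 0"
    and \<phi>_eq: "\<forall>z\<in>bidisk. poly2 p N z \<noteq> 0 \<longrightarrow> \<phi> z = poly2 q N z / poly2 p N z"
    and AE: "AE x in lborel. x \<in> {0..2*pi} \<times> {0..2*pi} \<longrightarrow>
           (let \<zeta> = (cis (fst x), cis (snd x)) in
              poly2 p N \<zeta> \<noteq> 0 \<and> cmod (poly2 q N \<zeta> / poly2 p N \<zeta>) = 1)"
    using assms(1) unfolding rational_inner_def by blast
  moreover have "fst \<tau> \<noteq> 0" "snd \<tau> \<noteq> 0" using assms(2) by (auto simp: torus2_def)
  ultimately have "curve_poly p N \<tau> \<noteq> 0" using curve_poly_nonzero by blast
  moreover have "cmod (poly (curve_poly q N \<tau>) z) = cmod (poly (curve_poly p N \<tau>) z)"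
    if "cmod z = 1" for z
    unfolding poly_curve_poly
    by (rule poly2_norm_eq_on_torus[OF AE bidisk_curve_in_torus2[OF assms(2) that]])
  ultimately obtain \<delta> C where "\<delta> > 0" and estimate: "\<And>r. 1 - \<delta> < r \<Longrightarrow> r < 1 \<Longrightarrow>
      poly (curve_poly p N \<tau>) (of_real r) \<noteq> 0 \<and>
      \<bar>1 - cmod (poly (curve_poly q N \<tau>) (of_real r) / poly (curve_poly p N \<tau>) (of_real r))\<bar> \<le> C * (1 - r)"
    using radial_estimate_at_1 by blast
  obtain r where r: "\<And>k. 0 \<le> r k" "\<And>k. 1 - \<delta> < r k" "\<And>k. r k < 1" and "r \<longlonglongrightarrow> 1"
    using tendsto_1_from_below[OF \<open>\<delta> > 0\<close>] by blast
  define lam where "lam k = bidisk_curve N \<tau> (of_real (r k))" for k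
  have lam: "lam k \<in> bidisk" "maxnorm (lam k) = r k" for k
    unfolding lam_def using r(1,3)[of k] bidisk_curve_in_bidisk maxnorm_bidisk_curve assms(2) by auto
  have "lam \<longlonglongrightarrow> \<tau>" unfolding lam_def by (rule tendsto_bidisk_curve_radial[OF \<open>r \<longlonglongrightarrow> 1\<close>])
  moreover have "\<bar>(1 - cmod (\<phi> (lam k))) / (1 - maxnorm (lam k))\<bar> \<le> C" for k
    using estimate[OF r(2,3)] \<phi>_eq lam r(3)[of k]
    by (simp add: lam_def poly_curve_poly divide_le_eq abs_divide)
  ultimately show ?thesis
    using lam by (intro exI[of _ lam]) (auto simp: bounded_iff)
qed

end
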